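(* Let $G$ be a Tanner graph and $L\ge1$. Then $P^B_{BSC}(G)\subseteq P^B_{TAWGN(L)}(G)\subseteq P^B_{AWGN}(G)$.
   Context: A Tanner graph $G$ is a finite bipartite graph with variable nodes $v_1,\dots,v_n$ and check nodes; its code consists of all $x\in\{0,1\}^n$ with every check node having an even number of neighbours $v_i$ with $x_i=1$. A degree-$\ell$ lift replaces each node by $\ell$ copies and each edge by a perfect matching between copy-sets; a lift-realizable pseudocodeword $p\in\mathbb{Z}_{\ge0}^n$ is obtained from a codeword of the code of a finite lift by letting $p_i$ be the number of copies of $v_i$ assigned 1. The cost of $p$ with respect to a weight vector (vector of channel log-likelihood ratios) $w\in\mathbb{R}^n$ is $pw^T=\sum_ip_iw_i$. The possible weight vectors are $\{+1,-1\}^n$ for the binary symmetric channel (BSC), $[-L,L]^n$ for the truncated AWGN channel $TAWGN(L)$ (AWGN channel with log-likelihood ratios truncated to $[-L,L]$), and $\mathbb{R}^n$ for the AWGN channel. For each of these channels $X$, $P^B_X(G)$ is the set of lift-realizable pseudocodewords $p$ of $G$ for which there exists a weight vector $w$ possible for $X$ such that the cost $pw^T$ is the smallest among the costs of all lift-realizable pseudocodewords of $G$. *)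

theory Defs
  imports Complex_Main
begin

definition tanner_graph :: "nat \<Rightarrow> 'c set \<Rightarrow> (nat \<times> 'c) set \<Rightarrow> bool" where
  "tanner_graph n C E \<longleftrightarrow> finite C \<and> E \<subseteq> {..<n} \<times> C"

text \<open>Degree-l lift: copy (v,i) resp. (c,j) for i,j < l; the edge (v,c) of G becomes the
  perfect matching {((v,i),(c, \<sigma> (v,c) i)) | i < l}, with \<sigma> (v,c) a bijection of {..<l}.\<close>
definition lift_codeword ::
  "'c set \<Rightarrow> (nat \<times> 'c) set \<Rightarrow> nat \<Rightarrow> (nat \<times> 'c \<Rightarrow> nat \<Rightarrow> nat) \<Rightarrow> (nat \<Rightarrow> nat \<Rightarrow> bool) \<Rightarrow> bool" where
  "lift_codeword C E l \<sigma> x \<longleftrightarrow>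
     (\<forall>c\<in>C. \<forall>j<l. even (card {(v, i). (v, c) \<in> E \<and> i < l \<and> \<sigma> (v, c) i = j \<and> x v i}))"

definition lift_realizable :: "nat \<Rightarrow> 'c set \<Rightarrow> (nat \<times> 'c) set \<Rightarrow> (nat \<Rightarrow> nat) \<Rightarrow> bool" where
  "lift_realizable n C E p \<longleftrightarrow>
     (\<forall>v\<ge>n. p v = 0) \<and>
     (\<exists>l \<sigma> x. l \<ge> 1 \<and> (\<forall>e\<in>E. bij_betw (\<sigma> e) {..<l} {..<l}) \<and>
        lift_codeword C E l \<sigma> x \<and> (\<forall>v<n. p v = card {i. i < l \<and> x v i}))"

definition cost :: "nat \<Rightarrow> (nat \<Rightarrow> nat) \<Rightarrow> (nat \<Rightarrow> real) \<Rightarrow> real" where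
  "cost n p w = (\<Sum>v<n. real (p v) * w v)"

datatype channel = BSC | TAWGN real | AWGN

text \<open>Possible weight vectors (only the coordinates 0..n-1 matter).\<close>
fun possible_weight :: "nat \<Rightarrow> channel \<Rightarrow> (nat \<Rightarrow> real) \<Rightarrow> bool" where
  "possible_weight n BSC w \<longleftrightarrow> (\<forall>v<n. w v = 1 \<or> w v = -1)"
| "possible_weight n (TAWGN L) w \<longleftrightarrow> (\<forall>v<n. -L \<le> w v \<and> w v \<le> L)"
| "possible_weight n AWGN w \<longleftrightarrow> True"

definition PB :: "nat \<Rightarrow> 'c set \<Rightarrow> (nat \<times> 'c) set \<Rightarrow> channel \<Rightarrow> (nat \<Rightarrow> nat) set" where
  "PB n C E X = {p. lift_realizable n C E p \<and>
      (\<exists>w. possible_weight n X w \<and>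
         (\<forall>q. lift_realizable n C E q \<longrightarrow> cost n p w \<le> cost n q w))}"

end

theory Submission
  imports Defs
begin

lemma PB_mono_weights:
  assumes "\<And>w. possible_weight n X w \<Longrightarrow> possible_weight n Y w"
  shows "PB n C E X \<subseteq> PB n C E Y"
  using assms unfolding PB_def by blast

lemma possible_weight_BSC_imp_TAWGN:
  assumes "possible_weight n BSC w" and "L \<ge> 1"
  shows "possible_weight n (TAWGN L) w"
  using assms by force

lemma possible_weight_AWGN: "possible_weight n AWGN w"
  by simp

theorem theorem10:
  fixes n :: nat and C :: "'c set" and E :: "(nat \<times> 'c) set" and L :: real
  assumes "tanner_graph n C E" and "L \<ge> 1"
  shows "PB n C E BSC \<subseteq> PB n C E (TAWGN L) \<and> PB n C E (TAWGN L) \<subseteq> PB n C E AWGN"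
proof
  show "PB n C E BSC \<subseteq> PB n C E (TAWGN L)"
    by (rule PB_mono_weights) (rule possible_weight_BSC_imp_TAWGN[OF _ \<open>L \<ge> 1\<close>])
next
  show "PB n C E (TAWGN L) \<subseteq> PB n C E AWGN"
    by (rule PB_mono_weights) (rule possible_weight_AWGN)
qed

end
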